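(* Let $d\ge2$, $j\in[d-1]$, $\bar{\mathbf p}$ a $j$-critical direction, $(\mathcal G_\tau)=(\mathcal G(n,\tau\bar{\mathbf p}))_\tau$ the associated process, and $\varepsilon>0$ a constant. Then with high probability, any copy $(K,C)$ of $M_{j,k}$ (for any $j\le k\le d$) which exists in $\mathcal G_\tau$ for any $\tau\ge\frac{\varepsilon}{\log n}$ can be extended to a copy $(K,C,w,a)$ of $\hat M_{j,k}$ in $\mathcal G_\tau$.
   Context: Whp = with probability tending to $1$ as $n\to\infty$. Process: for each $k\in[d]$ and each $(k+1)$-subset $K$ of $[n]$ sample independently $t_K$ uniform in $[0,1]$; $\tau_K=t_K/\bar p_k$ (infinite if $\bar p_k=0$); $\mathcal G_\tau$ is the complex of all singletons and all nonempty subsets of sets $K$ with $\tau_K\le\tau$. $j$-critical direction: $\bar{\mathbf p}$ is $j$-admissible if for each $1\le k\le d$ there are real constants $\bar\alpha_k,\bar\gamma_k$ and a function $\bar\beta_k(n)$ with $\bar p_k=\frac{\bar\alpha_k\log n+\bar\beta_k}{n^{k-j+\bar\gamma_k}}(k-j)!$ and (A1) at least one of $\bar\alpha_k,\bar\gamma_k$ zero, neither negative; (A2) if $\bar\alpha_k=0$ then $\bar\beta_k\equiv0$ or $\bar\beta_k>0$ with $\bar\beta_k=o(n^\varepsilon)$, $\bar\beta_k=\omega(n^{-\varepsilon})$ for every constant $\varepsilon>0$; (A3) if $\bar\gamma_k=0$ then $|\bar\beta_k|=o(\log n)$; (A4) some $k\in\{j+1,\dots,d\}$ has $\bar\alpha_k>0$.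 For $j\le k\le d$, $\bar p_k\ne0$: $\bar\lambda_k=j+1-\bar\gamma_k-(k-j+1)\sum_{i=j+1}^d\bar\alpha_i$; $\bar\mu_k=-(k-j+1)\sum_{i=j+1}^d\bar\beta_i/n^{\bar\gamma_i}$ plus $0$ if $\bar p_k>1$, $\log\log n$ if $\bar p_k\le1,\bar\alpha_k\ne0$, $\log\bar\beta_k$ if $\bar p_k\le1,\bar\alpha_k=0$; $\bar\nu_k=-\log((j+1)!)$ if $k=j$, $-\log(j!)-\log(k-j+1)+\log\bar\alpha_k$ if $k\ne j,\bar\alpha_k\ne0$, $-\log(j!)-\log(k-j+1)$ otherwise. $j$-critical: $j$-admissible with $\bar\lambda_k\log n+\bar\mu_k+\bar\nu_k\le0$ for all such $k$ and equality for some $k$. Copies: a $(j+2)$-set is a $j$-shell if all its $(j+1)$-subsets are $j$-simplices. For $j+1\le k\le d$, $(K,C)$ is a copy of $M_{j,k}$ if $K$ is a $k$-simplex, $C\subset K$, $|C|=j$, and every simplex containing some $C\cup\{x\}$ ($x\in K\setminus C$) lies in $K$; $(K,C,w,a)$ is a copy of $\hat M_{j,k}$ if moreover $w\in K\setminus C$, $a\in[n]\setminus K$ and $C\cup\{w,a\}$ is a $j$-shell. For $k=j$: $(K,C)$ is a copy of $M_{j,j}$ if $K$ is an isolated $j$-simplex (in no other simplex) and $C$ is its first $j$ vertices in increasing order; $(K,C,w,a)$ is a copy of $\hat M_{j,j}$ if moreover $w$ is the last vertex of $K$ and $a\notin K$ with $K\cup\{a\}$ a $j$-shell. *)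

theory Defs
  imports "HOL-Probability.Probability" "HOL-Library.Landau_Symbols"
begin

text \<open>A direction is p :: nat => nat => real, p k n being the k-th coordinate
  of the direction vector for n vertices (k = 1..d).
  alpha, gamma :: nat => real are the constants and beta :: nat => nat => real
  the functions beta k n of the admissibility definition.\<close>

definition j_admissible_with ::
  "nat \<Rightarrow> nat \<Rightarrow> (nat \<Rightarrow> nat \<Rightarrow> real) \<Rightarrow> (nat \<Rightarrow> real) \<Rightarrow> (nat \<Rightarrow> nat \<Rightarrow> real) \<Rightarrow> (nat \<Rightarrow> real) \<Rightarrow> bool"
where
  "j_admissible_with d j p \<alpha> \<beta> \<gamma> \<longleftrightarrow>
     (\<forall>k\<in>{1..d}.
        (\<forall>n. p k n = (\<alpha> k * ln (real n) + \<beta> k n)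
                      / real n powr (real k - real j + \<gamma> k) * fact (nat (int k - int j)))
      \<and> \<comment> \<open>(A1)\<close> (\<alpha> k \<ge> 0 \<and> \<gamma> k \<ge> 0 \<and> (\<alpha> k = 0 \<or> \<gamma> k = 0))
      \<and> \<comment> \<open>(A2)\<close> (\<alpha> k = 0 \<longrightarrow>
             ((\<forall>n. \<beta> k n = 0) \<or>
              ((\<forall>n. \<beta> k n > 0) \<and>
               (\<forall>e::real. e > 0 \<longrightarrow>
                   (\<lambda>n. \<beta> k n) \<in> o(\<lambda>n. real n powr e) \<and>
                   (\<lambda>n. \<beta> k n) \<in> \<omega>(\<lambda>n. real n powr (- e))))))
      \<and> \<comment> \<open>(A3)\<close> (\<gamma> k = 0 \<longrightarrow> (\<lambda>n. \<bar>\<beta> k n\<bar>) \<in> o(\<lambda>n. ln (real n))))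
   \<and> \<comment> \<open>(A4)\<close> (\<exists>k\<in>{j+1..d}. \<alpha> k > 0)"

definition lambda_bar :: "nat \<Rightarrow> nat \<Rightarrow> (nat \<Rightarrow> real) \<Rightarrow> (nat \<Rightarrow> real) \<Rightarrow> nat \<Rightarrow> real" where
  "lambda_bar d j \<alpha> \<gamma> k =
     real j + 1 - \<gamma> k - (real k - real j + 1) * (\<Sum>i\<in>{j+1..d}. \<alpha> i)"

definition mu_bar :: "nat \<Rightarrow> nat \<Rightarrow> (nat \<Rightarrow> nat \<Rightarrow> real) \<Rightarrow> (nat \<Rightarrow> real) \<Rightarrow> (nat \<Rightarrow> nat \<Rightarrow> real)
    \<Rightarrow> (nat \<Rightarrow> real) \<Rightarrow> nat \<Rightarrow> nat \<Rightarrow> real" where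
  "mu_bar d j p \<alpha> \<beta> \<gamma> k n =
     - (real k - real j + 1) * (\<Sum>i\<in>{j+1..d}. \<beta> i n / real n powr \<gamma> i)
     + (if p k n > 1 then 0
        else if \<alpha> k \<noteq> 0 then ln (ln (real n))
        else ln (\<beta> k n))"

definition nu_bar :: "nat \<Rightarrow> (nat \<Rightarrow> real) \<Rightarrow> nat \<Rightarrow> real" where
  "nu_bar j \<alpha> k =
     (if k = j then - ln (fact (j + 1))
      else if \<alpha> k \<noteq> 0 then - ln (fact j) - ln (real k - real j + 1) + ln (\<alpha> k)
      else - ln (fact j) - ln (real k - real j + 1))"

definition crit_expr ::
  "nat \<Rightarrow> nat \<Rightarrow> (nat \<Rightarrow> nat \<Rightarrow> real) \<Rightarrow> (nat \<Rightarrow> real) \<Rightarrow> (nat \<Rightarrow> nat \<Rightarrow> real) \<Rightarrow> (nat \<Rightarrow> real)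
    \<Rightarrow> nat \<Rightarrow> nat \<Rightarrow> real" where
  "crit_expr d j p \<alpha> \<beta> \<gamma> k n =
     lambda_bar d j \<alpha> \<gamma> k * ln (real n) + mu_bar d j p \<alpha> \<beta> \<gamma> k n + nu_bar j \<alpha> k"

definition j_critical :: "nat \<Rightarrow> nat \<Rightarrow> (nat \<Rightarrow> nat \<Rightarrow> real) \<Rightarrow> bool" where
  "j_critical d j p \<longleftrightarrow>
     (\<exists>\<alpha> \<beta> \<gamma>. j_admissible_with d j p \<alpha> \<beta> \<gamma>
        \<and> (\<forall>k\<in>{j..d}. p k \<noteq> (\<lambda>_. 0) \<longrightarrow>
              (\<forall>\<^sub>F n in sequentially. crit_expr d j p \<alpha> \<beta> \<gamma> k n \<le> 0))
        \<and> (\<exists>k\<in>{j..d}. p k \<noteq> (\<lambda>_. 0) \<and>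
              (\<forall>\<^sub>F n in sequentially. crit_expr d j p \<alpha> \<beta> \<gamma> k n = 0)))"

definition faces :: "nat \<Rightarrow> nat \<Rightarrow> nat set set" where
  "faces d n = {K. K \<subseteq> {1..n} \<and> 2 \<le> card K \<and> card K \<le> d + 1}"

text \<open>Probability space of the i.i.d. uniform labels t_K.\<close>
definition proc_space :: "nat \<Rightarrow> nat \<Rightarrow> (nat set \<Rightarrow> real) measure" where
  "proc_space d n = PiM (faces d n) (\<lambda>_. uniform_measure lborel {0..1::real})"

definition tauK :: "(nat \<Rightarrow> nat \<Rightarrow> real) \<Rightarrow> nat \<Rightarrow> (nat set \<Rightarrow> real) \<Rightarrow> nat set \<Rightarrow> ereal" where
  "tauK p n t K =
     (if p (card K - 1) n = 0 then \<infinity> else ereal (t K / p (card K - 1) n))"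

definition cplx :: "nat \<Rightarrow> nat \<Rightarrow> (nat \<Rightarrow> nat \<Rightarrow> real) \<Rightarrow> (nat set \<Rightarrow> real) \<Rightarrow> real \<Rightarrow> nat set set" where
  "cplx d n p t \<tau> =
     {{v} | v. v \<in> {1..n}} \<union>
     {\<sigma>. \<sigma> \<noteq> {} \<and> (\<exists>K\<in>faces d n. tauK p n t K \<le> ereal \<tau> \<and> \<sigma> \<subseteq> K)}"

definition is_shell :: "nat \<Rightarrow> nat set set \<Rightarrow> nat \<Rightarrow> nat set \<Rightarrow> bool" where
  "is_shell n G j S \<longleftrightarrow> S \<subseteq> {1..n} \<and> card S = j + 2 \<and> (\<forall>T\<subseteq>S. card T = j + 1 \<longrightarrow> T \<in> G)"

definition copyM :: "nat set set \<Rightarrow> nat \<Rightarrow> nat \<Rightarrow> nat set \<Rightarrow> nat set \<Rightarrow> bool" where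
  "copyM G j k K C \<longleftrightarrow>
     (if k = j then
        K \<in> G \<and> card K = j + 1 \<and> (\<forall>\<sigma>\<in>G. K \<subseteq> \<sigma> \<longrightarrow> \<sigma> = K) \<and> C = K - {Max K}
      else
        K \<in> G \<and> card K = k + 1 \<and> C \<subseteq> K \<and> card C = j \<and>
        (\<forall>\<sigma>\<in>G. \<forall>x\<in>K - C. insert x C \<subseteq> \<sigma> \<longrightarrow> \<sigma> \<subseteq> K))"

definition copyMhat :: "nat \<Rightarrow> nat set set \<Rightarrow> nat \<Rightarrow> nat \<Rightarrow> nat set \<Rightarrow> nat set \<Rightarrow> nat \<Rightarrow> nat \<Rightarrow> bool" where
  "copyMhat n G j k K C w a \<longleftrightarrow>
     copyM G j k K C \<and> a \<in> {1..n} - K \<and>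
     (if k = j then w = Max K \<and> is_shell n G j (insert a K)
      else w \<in> K - C \<and> is_shell n G j (C \<union> {w, a}))"

end

(*
  Fix an index j + r, r >= 1, with alpha_{j+r} > 0; admissibility then forces gamma_{j+r} = 0,
  so at every time tau >= eps / log n each (j+r)-face is present independently with
  probability theta >= c n^{-r}.  Split [n] into a reservoir X of size n/2 and d + 2 disjoint
  blocks of linear size.  For a (j+1)-set S and a vertex a of a block, each facet
  (S - s) + a of the would-be shell S + a lies in one of C(|X - S|, r) >= const n^r candidate
  faces (S - s) + a + R with R in X; all these faces are distinct, so a fails independently
  with probability bounded away from 1, and the whole block fails with probability
  exponentially small in n.  A union bound over the n^(j+1) sets S beats this.  A copy of
  M_{j,k} spans at most d + 1 vertices, so some block avoids it and supplies the extension
  vertex.  Of the critical direction only admissibility is used, via (A1), (A3) and (A4)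
  at the index j + r.
*)

theory Submission
  imports Defs "HOL-Real_Asymp.Real_Asymp"
begin

section \<open>Independent uniform labels\<close>

abbreviation unif01 :: "real measure" where
  "unif01 \<equiv> uniform_measure lborel {0..1}"

abbreviation iid_unif :: "'i set \<Rightarrow> ('i \<Rightarrow> real) measure" where
  "iid_unif I \<equiv> PiM I (\<lambda>_. unif01)"

lemma prob_space_unif01: "prob_space unif01"
  by (intro prob_space_uniform_measure) auto

lemma prob_space_iid_unif: "prob_space (iid_unif I)"
  by (intro prob_space_PiM prob_space_unif01)

lemma indep_vars_PiM_components:
  assumes M: "\<And>i. i \<in> I \<Longrightarrow> prob_space (M i)"
  shows "prob_space.indep_vars (PiM I M) M (\<lambda>i \<omega>. \<omega> i) I"
proof -
  interpret P: prob_space "PiM I M"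
    by (rule prob_space_PiM[OF M])
  show ?thesis
  proof (cases "I = {}")
    case True
    then show ?thesis
      unfolding P.indep_vars_def P.indep_sets_def by simp
  next
    case False
    have "distr (PiM I M) (PiM I M) (\<lambda>x. \<lambda>i\<in>I. x i) = distr (PiM I M) (PiM I M) (\<lambda>x. x)"
      by (intro distr_cong) (auto simp: space_PiM)
    also have "\<dots> = PiM I (\<lambda>i. distr (PiM I M) (M i) (\<lambda>\<omega>. \<omega> i))"
      by (simp, intro PiM_cong refl) (rule distr_PiM_component[symmetric, OF M])
    finally show ?thesis
      by (subst P.indep_vars_iff_distr_eq_PiM'[OF False]) auto
  qed
qed

lemma measure_PiM_Ball_disjoint_coords:
  fixes J :: "'l \<Rightarrow> 'i set" and P :: "'l \<Rightarrow> ('i \<Rightarrow> 'a) \<Rightarrow> bool"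
  assumes M: "\<And>i. i \<in> I \<Longrightarrow> prob_space (M i)"
    and L: "finite L" and J: "\<And>l. l \<in> L \<Longrightarrow> J l \<subseteq> I" "disjoint_family_on J L"
    and local: "\<And>l t. l \<in> L \<Longrightarrow> P l t = P l (restrict t (J l))"
    and meas: "\<And>l. l \<in> L \<Longrightarrow> Measurable.pred (PiM (J l) M) (P l)"
  shows "\<P>(t in PiM I M. \<forall>l\<in>L. P l t) = (\<Prod>l\<in>L. \<P>(t in PiM I M. P l t))"
proof -
  interpret P: prob_space "PiM I M"
    by (rule prob_space_PiM[OF M])
  define A where "A l = {u \<in> space (PiM (J l) M). P l u}" for l
  have A: "A l \<in> sets (PiM (J l) M)" if "l \<in> L" for l
    using meas[OF that] by (simp add: A_def pred_def)
  have preimage: "(\<lambda>\<omega>. restrict \<omega> (J l)) -` A l \<inter> space (PiM I M) = {t \<in> space (PiM I M). P l t}"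
    if "l \<in> L" for l
    using that local[OF that] J(1)[OF that] by (auto simp: A_def space_PiM)
  have indep: "P.indep_vars (\<lambda>l. PiM (J l) M) (\<lambda>l \<omega>. restrict \<omega> (J l)) L"
    using P.indep_vars_restrict[OF indep_vars_PiM_components[OF M] J] by simp
  show ?thesis
  proof (cases "L = {}")
    case True
    then show ?thesis
      by (simp add: P.prob_space)
  next
    case False
    have "{t \<in> space (PiM I M). \<forall>l\<in>L. P l t}
        = (\<Inter>l\<in>L. (\<lambda>\<omega>. restrict \<omega> (J l)) -` A l \<inter> space (PiM I M))"
      using preimage False by auto
    then show ?thesis
      using P.indep_varsD_finite[OF indep False L A] preimage by simp
  qed
qed

lemma prob_iid_unif_coord_greater:
  assumes "F \<in> I" "0 \<le> \<theta>" "\<theta> \<le> 1"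
  shows "\<P>(t in iid_unif I. \<theta> < t F) = 1 - \<theta>"
proof -
  have "\<P>(t in iid_unif I. \<theta> < t F) = measure (distr (iid_unif I) unif01 (\<lambda>t. t F)) {\<theta><..}"
    using assms by (subst measure_distr) (auto simp: vimage_def Int_def conj_commute)
  also have "distr (iid_unif I) unif01 (\<lambda>t. t F) = unif01"
    by (rule distr_PiM_component[OF prob_space_unif01 assms(1)])
  also have "measure unif01 {\<theta><..} = measure lborel ({0..1} \<inter> {\<theta><..}) / measure lborel {0..1::real}"
    by (rule measure_uniform_measure) auto
  also have "{0..1} \<inter> {\<theta><..} = {\<theta><..1::real}"
    using assms by auto
  finally show ?thesis
    using assms by simp
qed

lemma pred_iid_unif_all_greater:
  assumes "finite Rs" "\<And>R. R \<in> Rs \<Longrightarrow> G R \<in> I"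
  shows "Measurable.pred (iid_unif I) (\<lambda>t. \<forall>R\<in>Rs. \<theta> < t (G R))"
proof (intro pred_intros_finite(3)[OF assms(1)])
  fix R assume "R \<in> Rs"
  then have "G R \<in> I" using assms(2) by blast
  then show "Measurable.pred (iid_unif I) (\<lambda>t. \<theta> < t (G R))"
    by measurable
qed

lemma pred_iid_unif_ex_all_greater:
  assumes "finite S" "finite Rs" "\<And>s R. s \<in> S \<Longrightarrow> R \<in> Rs \<Longrightarrow> G s R \<in> I"
  shows "Measurable.pred (iid_unif I) (\<lambda>t. \<exists>s\<in>S. \<forall>R\<in>Rs. \<theta> < t (G s R))"
  using assms by (intro pred_intros_finite(4) pred_iid_unif_all_greater) auto

lemma pred_iid_unif_all_ex_all_greater:
  assumes "finite A" "finite S" "finite Rs" "\<And>a s R. a \<in> A \<Longrightarrow> s \<in> S \<Longrightarrow> R \<in> Rs \<Longrightarrow> F a s R \<in> I"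
  shows "Measurable.pred (iid_unif I) (\<lambda>t. \<forall>a\<in>A. \<exists>s\<in>S. \<forall>R\<in>Rs. \<theta> < t (F a s R))"
  using assms by (intro pred_intros_finite(3) pred_iid_unif_ex_all_greater) auto

lemma prob_iid_unif_all_greater:
  assumes "finite Rs" "inj_on G Rs" "\<And>R. R \<in> Rs \<Longrightarrow> G R \<in> I" "0 \<le> \<theta>" "\<theta> \<le> 1"
  shows "\<P>(t in iid_unif I. \<forall>R\<in>Rs. \<theta> < t (G R)) = (1 - \<theta>) ^ card Rs"
proof -
  have "\<P>(t in iid_unif I. \<forall>R\<in>Rs. \<theta> < t (G R)) = (\<Prod>R\<in>Rs. \<P>(t in iid_unif I. \<theta> < t (G R)))"
  proof (rule measure_PiM_Ball_disjoint_coords[where J = "\<lambda>R. {G R}"])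
    show "disjoint_family_on (\<lambda>R. {G R}) Rs"
      using assms(2) by (auto simp: disjoint_family_on_def inj_on_def)
    show "Measurable.pred (iid_unif {G R}) (\<lambda>t. \<theta> < t (G R))" for R
      by measurable
  qed (use assms prob_space_unif01 in auto)
  also have "\<dots> = (\<Prod>R\<in>Rs. 1 - \<theta>)"
    using assms by (intro prod.cong refl prob_iid_unif_coord_greater) auto
  finally show ?thesis
    by simp
qed

lemma prob_iid_unif_ex_all_greater:
  assumes "finite S" "finite Rs" "inj_on (\<lambda>(s, R). G s R) (S \<times> Rs)"
    and "\<And>s R. s \<in> S \<Longrightarrow> R \<in> Rs \<Longrightarrow> G s R \<in> I" "0 \<le> \<theta>" "\<theta> \<le> 1"
  shows "\<P>(t in iid_unif I. \<exists>s\<in>S. \<forall>R\<in>Rs. \<theta> < t (G s R))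
       = 1 - (1 - (1 - \<theta>) ^ card Rs) ^ card S"
proof -
  interpret P: prob_space "iid_unif I"
    by (rule prob_space_iid_unif)
  have pred: "Measurable.pred (iid_unif J) (\<lambda>t. \<forall>R\<in>Rs. \<theta> < t (G s R))"
    if "\<And>R. R \<in> Rs \<Longrightarrow> G s R \<in> J" for s J
    using pred_iid_unif_all_greater[OF assms(2) that] .
  have all: "\<P>(t in iid_unif I. \<forall>R\<in>Rs. \<theta> < t (G s R)) = (1 - \<theta>) ^ card Rs" if "s \<in> S" for s
    using that assms by (intro prob_iid_unif_all_greater) (auto simp: inj_on_def)
  have "\<P>(t in iid_unif I. \<forall>s\<in>S. \<not> (\<forall>R\<in>Rs. \<theta> < t (G s R)))
      = (\<Prod>s\<in>S. \<P>(t in iid_unif I. \<not> (\<forall>R\<in>Rs. \<theta> < t (G s R))))"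
  proof (rule measure_PiM_Ball_disjoint_coords[where J = "\<lambda>s. G s ` Rs"])
    show "disjoint_family_on (\<lambda>s. G s ` Rs) S"
      using assms(3) by (auto simp: disjoint_family_on_def inj_on_def)
  qed (use assms pred prob_space_unif01 in auto)
  also have "\<dots> = (\<Prod>s\<in>S. 1 - (1 - \<theta>) ^ card Rs)"
  proof (intro prod.cong refl)
    fix s assume "s \<in> S"
    then show "\<P>(t in iid_unif I. \<not> (\<forall>R\<in>Rs. \<theta> < t (G s R))) = 1 - (1 - \<theta>) ^ card Rs"
      using assms all pred[of s I] by (subst P.prob_neg) (auto simp: pred_def)
  qed
  finally have none: "\<P>(t in iid_unif I. \<forall>s\<in>S. \<not> (\<forall>R\<in>Rs. \<theta> < t (G s R)))
      = (1 - (1 - \<theta>) ^ card Rs) ^ card S"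
    by simp
  have "\<P>(t in iid_unif I. \<not> (\<exists>s\<in>S. \<forall>R\<in>Rs. \<theta> < t (G s R)))
      = 1 - \<P>(t in iid_unif I. \<exists>s\<in>S. \<forall>R\<in>Rs. \<theta> < t (G s R))"
    using pred_iid_unif_ex_all_greater[OF assms(1,2,4)] by (intro P.prob_neg) (simp add: pred_def)
  then show ?thesis
    using none by simp
qed

lemma prob_iid_unif_all_ex_all_greater:
  assumes "finite A" "finite S" "finite Rs" "inj_on (\<lambda>(a, s, R). F a s R) (A \<times> S \<times> Rs)"
    and "\<And>a s R. a \<in> A \<Longrightarrow> s \<in> S \<Longrightarrow> R \<in> Rs \<Longrightarrow> F a s R \<in> I" "0 \<le> \<theta>" "\<theta> \<le> 1"
  shows "\<P>(t in iid_unif I. \<forall>a\<in>A. \<exists>s\<in>S. \<forall>R\<in>Rs. \<theta> < t (F a s R))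
       = (1 - (1 - (1 - \<theta>) ^ card Rs) ^ card S) ^ card A"
proof -
  let ?J = "\<lambda>a. (\<lambda>(s, R). F a s R) ` (S \<times> Rs)"
  have "\<P>(t in iid_unif I. \<forall>a\<in>A. \<exists>s\<in>S. \<forall>R\<in>Rs. \<theta> < t (F a s R))
      = (\<Prod>a\<in>A. \<P>(t in iid_unif I. \<exists>s\<in>S. \<forall>R\<in>Rs. \<theta> < t (F a s R)))"
  proof (rule measure_PiM_Ball_disjoint_coords[where J = ?J])
    show "disjoint_family_on ?J A"
      using assms(4) by (auto simp: disjoint_family_on_def inj_on_def)
    show "Measurable.pred (iid_unif (?J a)) (\<lambda>t. \<exists>s\<in>S. \<forall>R\<in>Rs. \<theta> < t (F a s R))" for a
      using assms(2,3) by (intro pred_iid_unif_ex_all_greater) auto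
    show "(\<exists>s\<in>S. \<forall>R\<in>Rs. \<theta> < t (F a s R))
        \<longleftrightarrow> (\<exists>s\<in>S. \<forall>R\<in>Rs. \<theta> < restrict t (?J a) (F a s R))" for a t
      by force
  qed (use assms prob_space_unif01 in auto)
  also have "\<dots> = (\<Prod>a\<in>A. 1 - (1 - (1 - \<theta>) ^ card Rs) ^ card S)"
    using assms by (intro prod.cong refl prob_iid_unif_ex_all_greater) (auto simp: inj_on_def)
  finally show ?thesis
    by simp
qed

section \<open>Measurability of the extension event\<close>

definition active_faces :: "nat \<Rightarrow> nat \<Rightarrow> (nat \<Rightarrow> nat \<Rightarrow> real) \<Rightarrow> (nat set \<Rightarrow> real) \<Rightarrow> real \<Rightarrow> nat set set"
  where "active_faces d n p t \<tau> = {K \<in> faces d n. tauK p n t K \<le> ereal \<tau>}"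

definition generated_cplx :: "nat \<Rightarrow> nat set set \<Rightarrow> nat set set"
  where "generated_cplx n Q = {{v} | v. v \<in> {1..n}} \<union> {\<sigma>. \<sigma> \<noteq> {} \<and> (\<exists>K\<in>Q. \<sigma> \<subseteq> K)}"

lemma cplx_eq_generated_cplx: "cplx d n p t \<tau> = generated_cplx n (active_faces d n p t \<tau>)"
  unfolding cplx_def generated_cplx_def active_faces_def by auto

lemma finite_faces: "finite (faces d n)"
  unfolding faces_def by (rule finite_subset[of _ "Pow {1..n}"]) auto

lemma rat_between_real_and_finite_ereals:
  fixes X :: "ereal set"
  assumes "finite X" "\<And>x. x \<in> X \<Longrightarrow> ereal \<tau> < x"
  obtains q :: rat where "\<tau> < of_rat q" "\<And>x. x \<in> X \<Longrightarrow> ereal (of_rat q) < x"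
proof -
  define \<mu> where "\<mu> = Min (insert (ereal (\<tau> + 1)) X)"
  have "ereal \<tau> < \<mu>" "\<mu> \<le> ereal (\<tau> + 1)"
    using assms by (auto simp: \<mu>_def)
  then obtain r where r: "\<mu> = ereal r" "\<tau> < r"
    by (cases \<mu>) auto
  then obtain q :: rat where q: "\<tau> < of_rat q" "of_rat q < r"
    using of_rat_dense by blast
  have "ereal (of_rat q) < x" if "x \<in> X" for x
  proof -
    have "ereal (of_rat q) < \<mu>"
      using q(2) r(1) by simp
    also have "\<mu> \<le> x"
      using assms(1) that by (simp add: \<mu>_def)
    finally show ?thesis .
  qed
  with q(1) show ?thesis
    by (rule that)
qed

lemma active_faces_eq_at_rat:
  obtains q :: rat where "\<tau> \<le> of_rat q" "active_faces d n p t (of_rat q) = active_faces d n p t \<tau>"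
proof -
  have fin: "finite (tauK p n t ` (faces d n - active_faces d n p t \<tau>))"
    using finite_faces by blast
  obtain q :: rat where q: "\<tau> < of_rat q"
    "\<And>x. x \<in> tauK p n t ` (faces d n - active_faces d n p t \<tau>) \<Longrightarrow> ereal (of_rat q) < x"
    by (rule rat_between_real_and_finite_ereals[OF fin]) (auto simp: active_faces_def)
  have "K \<in> active_faces d n p t \<tau>" if K: "K \<in> active_faces d n p t (of_rat q)" for K
  proof (rule ccontr)
    assume "K \<notin> active_faces d n p t \<tau>"
    with K have "ereal (of_rat q) < tauK p n t K"
      by (intro q(2)) (auto simp: active_faces_def)
    with K show False
      by (auto simp: active_faces_def dest: leD)
  qed
  moreover have "active_faces d n p t \<tau> \<subseteq> active_faces d n p t (of_rat q)"
  proof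
    fix K assume "K \<in> active_faces d n p t \<tau>"
    moreover have "ereal \<tau> \<le> ereal (of_rat q)"
      using q(1) by simp
    ultimately show "K \<in> active_faces d n p t (of_rat q)"
      by (auto simp: active_faces_def intro: order.trans[of _ "ereal \<tau>"])
  qed
  ultimately show ?thesis
    using q(1) by (intro that[of q]) auto
qed

lemma pred_tauK:
  assumes "K \<in> faces d n"
  shows "Measurable.pred (proc_space d n) (\<lambda>t. tauK p n t K \<le> ereal \<tau>)"
  unfolding tauK_def proc_space_def using assms by measurable

lemma pred_active_faces:
  "Measurable.pred (proc_space d n) (\<lambda>t. \<Phi> (active_faces d n p t \<tau>))"
proof -
  have "\<Phi> (active_faces d n p t \<tau>) \<longleftrightarrow>
      (\<exists>Q\<in>Pow (faces d n). (\<forall>K\<in>faces d n. tauK p n t K \<le> ereal \<tau> \<longleftrightarrow> K \<in> Q) \<and> \<Phi> Q)" for t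
  proof
    assume "\<Phi> (active_faces d n p t \<tau>)"
    then show "\<exists>Q\<in>Pow (faces d n). (\<forall>K\<in>faces d n. tauK p n t K \<le> ereal \<tau> \<longleftrightarrow> K \<in> Q) \<and> \<Phi> Q"
      by (intro bexI[of _ "active_faces d n p t \<tau>"]) (auto simp: active_faces_def)
  next
    assume "\<exists>Q\<in>Pow (faces d n). (\<forall>K\<in>faces d n. tauK p n t K \<le> ereal \<tau> \<longleftrightarrow> K \<in> Q) \<and> \<Phi> Q"
    then obtain Q where "Q \<subseteq> faces d n" "\<forall>K\<in>faces d n. tauK p n t K \<le> ereal \<tau> \<longleftrightarrow> K \<in> Q" "\<Phi> Q"
      by blast
    moreover from this have "active_faces d n p t \<tau> = Q"
      by (auto simp: active_faces_def)
    ultimately show "\<Phi> (active_faces d n p t \<tau>)"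
      by simp
  qed
  moreover have "Measurable.pred (proc_space d n) (\<lambda>t.
      \<exists>Q\<in>Pow (faces d n). (\<forall>K\<in>faces d n. tauK p n t K \<le> ereal \<tau> \<longleftrightarrow> K \<in> Q) \<and> \<Phi> Q)"
    by (intro pred_intros_finite(3,4) pred_intros_conj2' pred_intros_logic(6) pred_tauK measurable_const)
      (simp_all add: finite_faces)
  ultimately show ?thesis
    by simp
qed

lemma sets_Collect_all_ge_active_faces:
  "{t \<in> space (proc_space d n). \<forall>\<tau>. \<tau>0 \<le> \<tau> \<longrightarrow> \<Phi> (active_faces d n p t \<tau>)} \<in> sets (proc_space d n)"
proof -
  have "{t \<in> space (proc_space d n). \<forall>\<tau>. \<tau>0 \<le> \<tau> \<longrightarrow> \<Phi> (active_faces d n p t \<tau>)}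
      = {t \<in> space (proc_space d n). \<forall>q::rat. \<tau>0 \<le> of_rat q \<longrightarrow> \<Phi> (active_faces d n p t (of_rat q))}"
  proof (intro Collect_cong conj_cong refl iffI allI impI)
    fix t \<tau>
    assume rat: "\<forall>q::rat. \<tau>0 \<le> of_rat q \<longrightarrow> \<Phi> (active_faces d n p t (of_rat q))" and "\<tau>0 \<le> \<tau>"
    obtain q :: rat where q: "\<tau> \<le> of_rat q" "active_faces d n p t (of_rat q) = active_faces d n p t \<tau>"
      by (rule active_faces_eq_at_rat)
    with \<open>\<tau>0 \<le> \<tau>\<close> have "\<tau>0 \<le> of_rat q"
      by linarith
    with rat q(2) show "\<Phi> (active_faces d n p t \<tau>)"
      by auto
  qed auto
  also have "\<dots> \<in> sets (proc_space d n)"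
    by (rule predE, rule pred_intros_countable(1), rule pred_intros_imp', rule pred_active_faces)
  finally show ?thesis .
qed

section \<open>Shells and copies\<close>

definition copies_extend :: "nat \<Rightarrow> nat \<Rightarrow> nat \<Rightarrow> nat set set \<Rightarrow> bool" where
  "copies_extend n d j G \<longleftrightarrow>
     (\<forall>k\<in>{j..d}. \<forall>K C. copyM G j k K C \<longrightarrow> (\<exists>w a. copyMhat n G j k K C w a))"

lemma cplx_subset_vertices: "\<sigma> \<in> cplx d n p t \<tau> \<Longrightarrow> \<sigma> \<subseteq> {1..n}"
  unfolding cplx_def faces_def by blast

lemma cplx_downward_closed:
  assumes "\<sigma> \<in> cplx d n p t \<tau>" "T \<subseteq> \<sigma>" "T \<noteq> {}"
  shows "T \<in> cplx d n p t \<tau>"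
proof -
  consider v where "\<sigma> = {v}" "v \<in> {1..n}"
    | K where "K \<in> faces d n" "tauK p n t K \<le> ereal \<tau>" "\<sigma> \<subseteq> K"
    using assms(1) unfolding cplx_def by blast
  then show ?thesis
  proof cases
    case 1
    then have "T = \<sigma>"
      using assms(2,3) by (auto dest: subset_singletonD)
    then show ?thesis
      using assms(1) by simp
  next
    case 2
    then show ?thesis
      using assms(2,3) unfolding cplx_def by blast
  qed
qed

lemma cplx_if_subset_face:
  assumes "F \<in> faces d n" "tauK p n t F \<le> ereal \<tau>" "T \<subseteq> F" "T \<noteq> {}"
  shows "T \<in> cplx d n p t \<tau>"
  using assms unfolding cplx_def by blast

lemma is_shell_insertI:
  assumes S: "S \<subseteq> {1..n}" "card S = j + 1" "S \<in> G"
    and a: "a \<in> {1..n}" "a \<notin> S"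
    and facets: "\<And>s. s \<in> S \<Longrightarrow> insert a (S - {s}) \<in> G"
  shows "is_shell n G j (insert a S)"
  unfolding is_shell_def
proof (intro conjI allI impI)
  have "finite S"
    using S(1) finite_subset by blast
  then show "card (insert a S) = j + 2"
    using S(2) a(2) by simp
  show "insert a S \<subseteq> {1..n}"
    using S(1) a(1) by blast
  fix T assume T: "T \<subseteq> insert a S" "card T = j + 1"
  show "T \<in> G"
  proof (cases "a \<in> T")
    case False
    then have "T \<subseteq> S"
      using T(1) by blast
    then have "T = S"
      using card_subset_eq[OF \<open>finite S\<close>] T(2) S(2) by simp
    then show ?thesis
      using S(3) by simp
  next
    case True
    have sub: "T - {a} \<subseteq> S"
      using T(1) by blast
    have card: "card (T - {a}) = j"
      using T(2) True by (simp add: card_Diff_singleton)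
    then have "T - {a} \<noteq> S"
      using S(2) by auto
    with sub obtain s where s: "s \<in> S" "T - {a} \<subseteq> S - {s}"
      by blast
    have "card (S - {s}) = j"
      using S(2) s(1) by (simp add: card_Diff_singleton)
    then have "T - {a} = S - {s}"
      using card_subset_eq[OF _ s(2)] \<open>finite S\<close> card by simp
    then have "T = insert a (S - {s})"
      using True by blast
    then show ?thesis
      using facets[OF s(1)] by simp
  qed
qed

lemma disjoint_family_on_avoids_small_set:
  assumes "finite K" "card K < g" "disjoint_family_on A {..<g}"
  shows "\<exists>i<g. A i \<inter> K = {}"
proof (rule ccontr)
  assume "\<not> (\<exists>i<g. A i \<inter> K = {})"
  then have "\<forall>i\<in>{..<g}. \<exists>x. x \<in> A i \<inter> K"
    by blast
  then obtain f where f: "\<forall>i\<in>{..<g}. f i \<in> A i \<inter> K"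
    by (rule bchoice[elim_format]) blast
  have "inj_on f {..<g}"
  proof (rule inj_onI)
    fix x y assume xy: "x \<in> {..<g}" "y \<in> {..<g}" "f x = f y"
    then have "A x \<inter> A y \<noteq> {}"
      using f by (metis IntD1 disjoint_iff)
    with xy show "x = y"
      using assms(3) unfolding disjoint_family_on_def by blast
  qed
  moreover have "f ` {..<g} \<subseteq> K"
    using f by blast
  ultimately have "card {..<g} \<le> card K"
    by (rule card_inj_on_le[OF _ _ assms(1)])
  with assms(2) show False
    by simp
qed

lemma copies_extend_if_shells:
  assumes sub: "\<And>\<sigma>. \<sigma> \<in> G \<Longrightarrow> \<sigma> \<subseteq> {1..n}"
    and down: "\<And>\<sigma> T. \<sigma> \<in> G \<Longrightarrow> T \<subseteq> \<sigma> \<Longrightarrow> T \<noteq> {} \<Longrightarrow> T \<in> G"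
    and blocks: "d + 1 < g" "\<And>i. i < g \<Longrightarrow> A i \<subseteq> {1..n}" "disjoint_family_on A {..<g}"
    and shells: "\<And>S i. S \<in> G \<Longrightarrow> card S = j + 1 \<Longrightarrow> i < g \<Longrightarrow>
        \<exists>a\<in>A i - S. is_shell n G j (insert a S)"
  shows "copies_extend n d j G"
  unfolding copies_extend_def
proof (intro ballI allI impI)
  fix k K C assume k: "k \<in> {j..d}" and copy: "copyM G j k K C"
  show "\<exists>w a. copyMhat n G j k K C w a"
  proof (cases "k = j")
    case True
    then have K: "K \<in> G" "card K = j + 1"
      using copy by (auto simp: copyM_def)
    obtain a where "a \<in> A 0 - K" "is_shell n G j (insert a K)"
      using shells[OF K] blocks(1) by auto
    then have "copyMhat n G j k K C (Max K) a"
      using copy True blocks(2)[of 0] blocks(1) by (auto simp: copyMhat_def)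
    then show ?thesis
      by blast
  next
    case False
    then have K: "K \<in> G" "card K = k + 1" "C \<subseteq> K" "card C = j"
      using copy by (auto simp: copyM_def)
    have "finite K"
      using sub[OF K(1)] finite_subset by blast
    moreover have "C \<noteq> K"
      using K k by auto
    ultimately obtain w where w: "w \<in> K - C"
      using K(3) by blast
    have S: "insert w C \<in> G" "card (insert w C) = j + 1"
      using down[OF K(1)] K(3,4) w finite_subset[OF K(3) \<open>finite K\<close>] by auto
    obtain i where i: "i < g" "A i \<inter> K = {}"
      using disjoint_family_on_avoids_small_set[OF \<open>finite K\<close> _ blocks(3)] K(2) k blocks(1) by auto
    obtain a where a: "a \<in> A i - insert w C" "is_shell n G j (insert a (insert w C))"
      using shells[OF S i(1)] by blast
    have "C \<union> {w, a} = insert a (insert w C)"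
      by auto
    with a i blocks(2)[OF i(1)] have "copyMhat n G j k K C w a"
      using copy False w by (auto simp: copyMhat_def)
    then show ?thesis
      by blast
  qed
qed

section \<open>Failing blocks\<close>

definition block :: "nat \<Rightarrow> nat \<Rightarrow> nat \<Rightarrow> nat set" where
  "block h b i = {h + i * b <.. h + i * b + b}"

lemma card_block: "card (block h b i) = b"
  by (simp add: block_def)

lemma block_Int_atLeastAtMost: "block h b i \<inter> {1..h} = {}"
  by (auto simp: block_def)

lemma block_subset:
  assumes "i < g" "h + g * b \<le> n"
  shows "block h b i \<subseteq> {1..n}"
proof -
  have "i * b + b \<le> g * b"
    using mult_le_mono1[of "Suc i" g b] assms(1) by simp
  with assms(2) show ?thesis
    by (auto simp: block_def)
qed

lemma disjoint_family_block: "disjoint_family (block h b)"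
proof -
  have "block h b i \<inter> block h b i' = {}" if "i < i'" for i i'
  proof -
    have "i * b + b \<le> i' * b"
      using mult_le_mono1[of "Suc i" i' b] that by simp
    then show ?thesis
      by (auto simp: block_def)
  qed
  then show ?thesis
    unfolding disjoint_family_on_def by (metis Int_commute linorder_neqE_nat)
qed

lemma extension_face_inj:
  assumes AX: "A \<inter> X = {}"
    and "a \<in> A - S" "a' \<in> A - S" "s \<in> S" "s' \<in> S" "R \<subseteq> X - S" "R' \<subseteq> X - S"
    and eq: "insert a (S - {s}) \<union> R = insert a' (S - {s'}) \<union> R'"
  shows "a = a' \<and> s = s' \<and> R = R'"
proof -
  have parts: "(insert x (S - {y}) \<union> Q) \<inter> (A - S) = {x}"
      "(insert x (S - {y}) \<union> Q) \<inter> (X - S) = Q"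
      "(insert x (S - {y}) \<union> Q) \<inter> S = S - {y}"
    if "x \<in> A - S" "Q \<subseteq> X - S" for x y Q
    using that AX by auto
  note this_side = parts[OF \<open>a \<in> A - S\<close> \<open>R \<subseteq> X - S\<close>, of s]
    and other_side = parts[OF \<open>a' \<in> A - S\<close> \<open>R' \<subseteq> X - S\<close>, of s']
  have "{a} = {a'}" "R = R'" "S - {s} = S - {s'}"
    using this_side other_side unfolding eq by simp_all
  with \<open>s \<in> S\<close> \<open>s' \<in> S\<close> show ?thesis
    by blast
qed

lemma extension_face_in_faces:
  assumes S: "S \<subseteq> {1..n}" "card S = j + 1" "s \<in> S"
    and a: "a \<in> {1..n} - S" "a \<notin> X"
    and R: "R \<subseteq> X - S" "X \<subseteq> {1..n}" "card R = r"
    and r: "1 \<le> r" "j + r \<le> d"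
  shows "insert a (S - {s}) \<union> R \<in> faces d n" "card (insert a (S - {s}) \<union> R) = j + r + 1"
proof -
  have "R \<subseteq> {1..n}"
    using R(1,2) by blast
  then have "finite S" "finite R"
    using S(1) finite_subset by auto
  then have "card (insert a (S - {s}) \<union> R) = card (insert a (S - {s})) + card R"
    using a R(1) by (intro card_Un_disjoint) auto
  also have "card (insert a (S - {s})) = j + 1"
    using \<open>finite S\<close> S(2,3) a(1) by (simp add: card_Diff_singleton)
  finally show card: "card (insert a (S - {s}) \<union> R) = j + r + 1"
    using R(3) by simp
  show "insert a (S - {s}) \<union> R \<in> faces d n"
    using card S(1) a(1) R(1,2) r unfolding faces_def by auto
qed

definition failing_block ::
    "nat \<Rightarrow> nat \<Rightarrow> real \<Rightarrow> nat \<Rightarrow> nat set \<Rightarrow> nat set \<Rightarrow> nat set \<Rightarrow> (nat set \<Rightarrow> real) set" where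
  "failing_block d n \<theta> r X A S = {t \<in> space (proc_space d n).
     \<forall>a\<in>A - S. \<exists>s\<in>S. \<forall>R\<in>{R. R \<subseteq> X - S \<and> card R = r}. \<theta> < t (insert a (S - {s}) \<union> R)}"

lemma failing_block:
  assumes r: "1 \<le> r" "j + r \<le> d" and X: "X \<subseteq> {1..n}"
    and A: "A \<subseteq> {1..n}" "A \<inter> X = {}" and S: "S \<subseteq> {1..n}" "card S = j + 1"
  shows "failing_block d n \<theta> r X A S \<in> sets (proc_space d n)"
    and "0 \<le> \<theta> \<Longrightarrow> \<theta> \<le> 1 \<Longrightarrow> measure (proc_space d n) (failing_block d n \<theta> r X A S)
      = (1 - (1 - (1 - \<theta>) ^ (card (X - S) choose r)) ^ (j + 1)) ^ card (A - S)"
proof -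
  define Rs where "Rs = {R. R \<subseteq> X - S \<and> card R = r}"
  have event: "failing_block d n \<theta> r X A S = {t \<in> space (iid_unif (faces d n)).
      \<forall>a\<in>A - S. \<exists>s\<in>S. \<forall>R\<in>Rs. \<theta> < t (insert a (S - {s}) \<union> R)}"
    unfolding failing_block_def Rs_def proc_space_def ..
  have "finite X" "finite A" "finite S"
    using finite_subset[OF X] finite_subset[OF A(1)] finite_subset[OF S(1)] by auto
  then have fin: "finite (A - S)" "finite S" "finite Rs"
    unfolding Rs_def by (auto intro: finite_subset[of _ "Pow X"])
  have in_faces: "insert a (S - {s}) \<union> R \<in> faces d n" if "a \<in> A - S" "s \<in> S" "R \<in> Rs" for a s R
    using that extension_face_in_faces(1)[OF S _ _ _ _ X _ r] A unfolding Rs_def by blast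
  have inj: "inj_on (\<lambda>(a, s, R). insert a (S - {s}) \<union> R) ((A - S) \<times> S \<times> Rs)"
  proof (rule inj_onI)
    fix x y
    assume x: "x \<in> (A - S) \<times> S \<times> Rs" and y: "y \<in> (A - S) \<times> S \<times> Rs"
      and eq: "(\<lambda>(a, s, R). insert a (S - {s}) \<union> R) x = (\<lambda>(a, s, R). insert a (S - {s}) \<union> R) y"
    obtain a s R a' s' R' where xy: "x = (a, s, R)" "y = (a', s', R')"
      by (cases x, cases y) auto
    show "x = y"
      using x y eq extension_face_inj[OF A(2), of a S a' s s' R R'] unfolding xy Rs_def by auto
  qed
  show "failing_block d n \<theta> r X A S \<in> sets (proc_space d n)"
    using pred_iid_unif_all_ex_all_greater[OF fin in_faces] unfolding event pred_def proc_space_def .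
  assume "0 \<le> \<theta>" "\<theta> \<le> 1"
  moreover have "card Rs = card (X - S) choose r"
    unfolding Rs_def using \<open>finite X\<close> by (intro n_subsets) blast
  ultimately show "measure (proc_space d n) (failing_block d n \<theta> r X A S)
      = (1 - (1 - (1 - \<theta>) ^ (card (X - S) choose r)) ^ (j + 1)) ^ card (A - S)"
    using prob_iid_unif_all_ex_all_greater[OF fin inj in_faces] S(2)
    unfolding event proc_space_def by simp
qed

lemma copies_extend_if_no_failing_block:
  assumes r: "1 \<le> r" "j + r \<le> d" and X: "X \<subseteq> {1..n}"
    and blocks: "d + 1 < g" "\<And>i. i < g \<Longrightarrow> A i \<subseteq> {1..n}" "\<And>i. i < g \<Longrightarrow> A i \<inter> X = {}"
      "disjoint_family_on A {..<g}"
    and threshold: "\<And>F. F \<in> faces d n \<Longrightarrow> card F = j + r + 1 \<Longrightarrow> t F \<le> \<theta> \<Longrightarrow> tauK p n t F \<le> ereal \<tau>"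
    and t: "t \<in> space (proc_space d n)"
    and no_failure: "\<And>S i. S \<subseteq> {1..n} \<Longrightarrow> card S = j + 1 \<Longrightarrow> i < g \<Longrightarrow> t \<notin> failing_block d n \<theta> r X (A i) S"
  shows "copies_extend n d j (cplx d n p t \<tau>)"
proof (rule copies_extend_if_shells[OF cplx_subset_vertices cplx_downward_closed blocks(1,2,4)])
  fix S i assume S: "S \<in> cplx d n p t \<tau>" "card S = j + 1" and i: "i < g"
  have "S \<subseteq> {1..n}"
    using S(1) by (rule cplx_subset_vertices)
  then obtain a where a: "a \<in> A i - S"
    and faces: "\<And>s. s \<in> S \<Longrightarrow> \<exists>R. R \<subseteq> X - S \<and> card R = r \<and> t (insert a (S - {s}) \<union> R) \<le> \<theta>"
    using no_failure[OF _ S(2) i] t by (force simp: failing_block_def not_less)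
  have a_new: "a \<in> {1..n} - S" "a \<notin> X"
    using a blocks(2,3)[OF i] by auto
  have "is_shell n (cplx d n p t \<tau>) j (insert a S)"
  proof (rule is_shell_insertI[OF \<open>S \<subseteq> {1..n}\<close> S(2,1)])
    show "a \<in> {1..n}" "a \<notin> S"
      using a_new by auto
    fix s assume "s \<in> S"
    then obtain R where R: "R \<subseteq> X - S" "card R = r" "t (insert a (S - {s}) \<union> R) \<le> \<theta>"
      using faces by blast
    note F = extension_face_in_faces[OF \<open>S \<subseteq> {1..n}\<close> S(2) \<open>s \<in> S\<close> a_new R(1) X R(2) r]
    show "insert a (S - {s}) \<in> cplx d n p t \<tau>"
      using threshold[OF F(1,2) R(3)] by (intro cplx_if_subset_face[OF F(1)]) auto
  qed
  with a show "\<exists>a\<in>A i - S. is_shell n (cplx d n p t \<tau>) j (insert a S)"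
    by blast
qed

definition extension_event ::
    "nat \<Rightarrow> nat \<Rightarrow> nat \<Rightarrow> (nat \<Rightarrow> nat \<Rightarrow> real) \<Rightarrow> real \<Rightarrow> (nat set \<Rightarrow> real) set" where
  "extension_event d n j p \<tau>0 =
     {t \<in> space (proc_space d n). \<forall>\<tau>. \<tau>0 \<le> \<tau> \<longrightarrow> copies_extend n d j (cplx d n p t \<tau>)}"

lemma sets_extension_event: "extension_event d n j p \<tau>0 \<in> sets (proc_space d n)"
  unfolding extension_event_def cplx_eq_generated_cplx
  by (rule sets_Collect_all_ge_active_faces)

lemma block_failure_prob_antimono:
  fixes \<theta> :: real
  assumes "0 \<le> \<theta>" "\<theta> \<le> 1" "N \<le> N'" "e \<le> e'"
  shows "(1 - (1 - (1 - \<theta>) ^ N') ^ k) ^ e' \<le> (1 - (1 - (1 - \<theta>) ^ N) ^ k) ^ e"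
proof -
  have u: "0 \<le> (1 - \<theta>) ^ N'" "(1 - \<theta>) ^ N' \<le> (1 - \<theta>) ^ N" "(1 - \<theta>) ^ N \<le> 1"
    using assms by (auto intro: power_decreasing power_le_one)
  then have x: "0 \<le> 1 - (1 - (1 - \<theta>) ^ N') ^ k" "1 - (1 - (1 - \<theta>) ^ N') ^ k \<le> 1"
    by (auto intro: power_le_one)
  have "(1 - (1 - \<theta>) ^ N) ^ k \<le> (1 - (1 - \<theta>) ^ N') ^ k"
    using u by (intro power_mono) auto
  then have "1 - (1 - (1 - \<theta>) ^ N') ^ k \<le> 1 - (1 - (1 - \<theta>) ^ N) ^ k"
    by simp
  then have "(1 - (1 - (1 - \<theta>) ^ N') ^ k) ^ e \<le> (1 - (1 - (1 - \<theta>) ^ N) ^ k) ^ e"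
    using x(1) by (rule power_mono)
  with power_decreasing[OF assms(4) x] show ?thesis
    by linarith
qed

lemma prob_failing_block_le:
  fixes \<theta> :: real
  assumes r: "1 \<le> r" "j + r \<le> d" and h: "h \<le> n"
    and A: "A \<subseteq> {1..n}" "A \<inter> {1..h} = {}" "b \<le> card A"
    and S: "S \<subseteq> {1..n}" "card S = j + 1" and \<theta>: "0 \<le> \<theta>" "\<theta> \<le> 1"
  shows "measure (proc_space d n) (failing_block d n \<theta> r {1..h} A S)
    \<le> (1 - (1 - (1 - \<theta>) ^ ((h - (j + 1)) choose r)) ^ (j + 1)) ^ (b - (j + 1))"
proof -
  have "finite S"
    using S(1) finite_subset by blast
  have X: "{1..h} \<subseteq> {1..n}"
    using h by auto
  have "h - (j + 1) \<le> card ({1..h} - S)"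
    using diff_card_le_card_Diff[OF \<open>finite S\<close>, of "{1..h}"] S(2) by simp
  then have "(h - (j + 1)) choose r \<le> card ({1..h} - S) choose r"
    by (rule binomial_right_mono)
  moreover have "b - (j + 1) \<le> card (A - S)"
    using diff_card_le_card_Diff[OF \<open>finite S\<close>, of A] S(2) A(3) by simp
  ultimately show ?thesis
    unfolding failing_block(2)[OF r X A(1,2) S \<theta>] by (rule block_failure_prob_antimono[OF \<theta>])
qed

definition some_block_fails :: "nat \<Rightarrow> nat \<Rightarrow> nat \<Rightarrow> nat \<Rightarrow> real \<Rightarrow> (nat set \<Rightarrow> real) set" where
  "some_block_fails d n j r \<theta> = (\<Union>(S, i) \<in> {S. S \<subseteq> {1..n} \<and> card S = j + 1} \<times> {..<d + 2}.
     failing_block d n \<theta> r {1..n div 2} (block (n div 2) ((n - n div 2) div (d + 2)) i) S)"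

definition union_failure_bound :: "nat \<Rightarrow> nat \<Rightarrow> nat \<Rightarrow> nat \<Rightarrow> real \<Rightarrow> real" where
  "union_failure_bound d j r n \<theta> = real (n choose (j + 1)) * real (d + 2) *
     (1 - (1 - (1 - \<theta>) ^ ((n div 2 - (j + 1)) choose r)) ^ (j + 1)) ^ ((n - n div 2) div (d + 2) - (j + 1))"

lemma blocks_subset_vertices:
  assumes "i < d + 2"
  shows "block (n div 2) ((n - n div 2) div (d + 2)) i \<subseteq> {1..n}"
proof (rule block_subset[OF assms])
  show "n div 2 + (d + 2) * ((n - n div 2) div (d + 2)) \<le> n"
    using times_div_less_eq_dividend[of "d + 2" "n - n div 2"] by linarith
qed

lemma some_block_fails:
  assumes r: "1 \<le> r" "j + r \<le> d"
  shows "some_block_fails d n j r \<theta> \<in> sets (proc_space d n)"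
    and "0 \<le> \<theta> \<Longrightarrow> \<theta> \<le> 1 \<Longrightarrow> measure (proc_space d n) (some_block_fails d n j r \<theta>) \<le> union_failure_bound d j r n \<theta>"
proof -
  interpret P: prob_space "proc_space d n"
    unfolding proc_space_def by (rule prob_space_iid_unif)
  define SS where "SS = {S. S \<subseteq> {1..n} \<and> card S = j + 1}"
  define fail where "fail = (\<lambda>(S, i).
    failing_block d n \<theta> r {1..n div 2} (block (n div 2) ((n - n div 2) div (d + 2)) i) S)"
  have union: "some_block_fails d n j r \<theta> = \<Union>(fail ` (SS \<times> {..<d + 2}))"
    unfolding some_block_fails_def fail_def SS_def ..
  have X: "{1..n div 2} \<subseteq> {1..n}"
    by auto
  have finite_SS: "finite SS"
    unfolding SS_def by (rule finite_subset[of _ "Pow {1..n}"]) auto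
  have fail_sets: "fail ` (SS \<times> {..<d + 2}) \<subseteq> P.events"
    using failing_block(1)[OF r X blocks_subset_vertices block_Int_atLeastAtMost]
    by (auto simp: fail_def SS_def)
  then show "some_block_fails d n j r \<theta> \<in> P.events"
    unfolding union using finite_SS by (intro sets.finite_UN) auto
  assume \<theta>: "0 \<le> \<theta>" "\<theta> \<le> 1"
  have "P.prob (\<Union>(fail ` (SS \<times> {..<d + 2}))) \<le> (\<Sum>x\<in>SS \<times> {..<d + 2}. P.prob (fail x))"
    using fail_sets finite_SS by (intro P.finite_measure_subadditive_finite) auto
  also have "\<dots> \<le> (\<Sum>x\<in>SS \<times> {..<d + 2}.
      (1 - (1 - (1 - \<theta>) ^ ((n div 2 - (j + 1)) choose r)) ^ (j + 1))
        ^ ((n - n div 2) div (d + 2) - (j + 1)))"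
    using prob_failing_block_le[OF r _ blocks_subset_vertices block_Int_atLeastAtMost _ _ _ \<theta>]
    by (intro sum_mono) (auto simp: fail_def SS_def card_block)
  also have "\<dots> = union_failure_bound d j r n \<theta>"
    by (simp add: union_failure_bound_def SS_def card_cartesian_product n_subsets algebra_simps)
  finally show "P.prob (some_block_fails d n j r \<theta>) \<le> union_failure_bound d j r n \<theta>"
    unfolding union .
qed

lemma extension_event_if_no_block_fails:
  assumes r: "1 \<le> r" "j + r \<le> d" and p: "0 < p (j + r) n" and \<theta>: "\<theta> = \<tau>0 * p (j + r) n"
  shows "space (proc_space d n) - some_block_fails d n j r \<theta> \<subseteq> extension_event d n j p \<tau>0"
proof
  fix t assume "t \<in> space (proc_space d n) - some_block_fails d n j r \<theta>"
  then have t: "t \<in> space (proc_space d n)"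
    "\<And>S i. S \<subseteq> {1..n} \<Longrightarrow> card S = j + 1 \<Longrightarrow> i < d + 2 \<Longrightarrow>
      t \<notin> failing_block d n \<theta> r {1..n div 2} (block (n div 2) ((n - n div 2) div (d + 2)) i) S"
    by (auto simp: some_block_fails_def)
  have "copies_extend n d j (cplx d n p t \<tau>)" if "\<tau>0 \<le> \<tau>" for \<tau>
  proof (rule copies_extend_if_no_failing_block[OF r _ _ blocks_subset_vertices block_Int_atLeastAtMost
        disjoint_family_on_mono[OF subset_UNIV disjoint_family_block] _ t])
    fix F assume F: "card F = j + r + 1" "t F \<le> \<theta>"
    have "t F \<le> \<tau> * p (j + r) n"
      using F(2) \<theta> mult_right_mono[OF \<open>\<tau>0 \<le> \<tau>\<close> less_imp_le[OF p]] by linarith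
    with F(1) p show "tauK p n t F \<le> ereal \<tau>"
      by (simp add: tauK_def divide_le_eq)
  qed auto
  with t(1) show "t \<in> extension_event d n j p \<tau>0"
    by (simp add: extension_event_def)
qed

lemma prob_extension_event_ge:
  assumes r: "1 \<le> r" "j + r \<le> d" and p: "0 < p (j + r) n"
    and \<theta>: "\<theta> = \<tau>0 * p (j + r) n" "0 \<le> \<theta>" "\<theta> \<le> 1"
  shows "1 - union_failure_bound d j r n \<theta> \<le> measure (proc_space d n) (extension_event d n j p \<tau>0)"
proof -
  interpret P: prob_space "proc_space d n"
    unfolding proc_space_def by (rule prob_space_iid_unif)
  have "1 - union_failure_bound d j r n \<theta> \<le> 1 - P.prob (some_block_fails d n j r \<theta>)"
    using some_block_fails(2)[OF r \<theta>(2,3)] by simp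
  also have "\<dots> = P.prob (space (proc_space d n) - some_block_fails d n j r \<theta>)"
    using some_block_fails(1)[OF r] by (rule P.prob_compl[symmetric])
  also have "\<dots> \<le> P.prob (extension_event d n j p \<tau>0)"
    using extension_event_if_no_block_fails[where p = p and n = n, OF r p \<theta>(1)] sets_extension_event
    by (rule P.finite_measure_mono)
  finally show ?thesis .
qed

section \<open>Asymptotics\<close>

lemma binomial_reservoir_ge:
  assumes r: "1 \<le> r" and n: "4 * (j + 2) + 4 * r \<le> n"
  shows "(real n / (4 * real r)) ^ r \<le> real ((n div 2 - (j + 1)) choose r)"
proof -
  define x where "x = n div 2 - (j + 1)"
  have "n \<le> 2 * (n div 2) + 1" "j + 1 \<le> n div 2"
    using n by presburger+
  then have x: "real n / 4 \<le> real x"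
    using n unfolding x_def by (simp add: of_nat_diff)
  then have "r \<le> x"
    using n by linarith
  have "(real n / (4 * real r)) ^ r \<le> (real x / real r) ^ r"
    using x r by (intro power_mono divide_right_mono) (auto simp: field_simps)
  also have "\<dots> \<le> real (x choose r)"
    using \<open>r \<le> x\<close> by (rule binomial_ge_n_over_k_pow_k)
  finally show ?thesis
    unfolding x_def .
qed

lemma one_minus_pow_le_exp:
  fixes \<theta> :: real
  assumes "\<theta> \<le> 1"
  shows "(1 - \<theta>) ^ N \<le> exp (- \<theta> * real N)"
proof -
  have "(1 - \<theta>) ^ N \<le> exp (- \<theta>) ^ N"
    using assms exp_ge_add_one_self[of "- \<theta>"] by (intro power_mono) auto
  also have "\<dots> = exp (- \<theta> * real N)"
    by (simp add: exp_of_nat_mult[symmetric] mult.commute)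
  finally show ?thesis .
qed

lemma block_count_ge:
  "real n / (2 * real (d + 2)) - real j - 2 \<le> real ((n - n div 2) div (d + 2) - (j + 1))"
proof -
  define m where "m = n - n div 2"
  have "n \<le> 2 * m"
    unfolding m_def by linarith
  moreover have "m < (d + 2) * (m div (d + 2) + 1)"
  proof -
    have "(d + 2) * (m div (d + 2)) + m mod (d + 2) = m" "m mod (d + 2) < d + 2"
      by (rule mult_div_mod_eq) simp
    then show ?thesis
      by (simp only: distrib_left mult_1_right)
  qed
  ultimately have "n < 2 * (d + 2) * (m div (d + 2) + 1)"
    by linarith
  then have "real n < real (2 * (d + 2) * (m div (d + 2) + 1))"
    by (simp only: of_nat_less_iff)
  then have "real n < 2 * real (d + 2) * (real (m div (d + 2)) + 1)"
    by (simp add: algebra_simps)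
  then have "real n / (2 * real (d + 2)) < real (m div (d + 2)) + 1"
    by (simp add: divide_less_eq mult.commute)
  then show ?thesis
    unfolding m_def by linarith
qed

text \<open>The constant \<open>c / (4 r)\<^sup>r\<close> comes from \<open>binomial_reservoir_ge\<close>: it bounds \<open>\<theta>\<close> times the number
  of reservoir extensions of a facet from below when \<open>\<theta> \<ge> c / n\<^sup>r\<close>.\<close>
definition vertex_failure_bound :: "nat \<Rightarrow> nat \<Rightarrow> real \<Rightarrow> real" where
  "vertex_failure_bound j r c = 1 - (1 - exp (- (c / (4 * real r) ^ r))) ^ (j + 1)"

lemma vertex_failure_bound_bounds:
  assumes "0 < c"
  shows "0 < vertex_failure_bound j r c" "vertex_failure_bound j r c < 1"
proof -
  have "0 < c / (4 * real r) ^ r"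
    using assms by (cases r) auto
  then have e: "0 < exp (- (c / (4 * real r) ^ r))" "exp (- (c / (4 * real r) ^ r)) < 1"
    by auto
  then have "(1 - exp (- (c / (4 * real r) ^ r))) ^ Suc j < 1"
    by (intro power_Suc_less_one) auto
  then show "0 < vertex_failure_bound j r c"
    by (simp add: vertex_failure_bound_def)
  have "0 < (1 - exp (- (c / (4 * real r) ^ r))) ^ (j + 1)"
    using e by simp
  then show "vertex_failure_bound j r c < 1"
    by (simp add: vertex_failure_bound_def)
qed

lemma vertex_failure_prob_le_bound:
  assumes r: "1 \<le> r" and c: "0 < c" and \<theta>: "c / real n ^ r \<le> \<theta>" "\<theta> \<le> 1"
    and n: "4 * (j + 2) + 4 * r \<le> n"
  shows "1 - (1 - (1 - \<theta>) ^ ((n div 2 - (j + 1)) choose r)) ^ (j + 1) \<le> vertex_failure_bound j r c"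
proof -
  define N where "N = (n div 2 - (j + 1)) choose r"
  have "0 < real n"
    using n by simp
  then have "c / (4 * real r) ^ r = c / real n ^ r * (real n / (4 * real r)) ^ r"
    by (simp add: power_divide)
  also have "\<dots> \<le> \<theta> * real N"
    unfolding N_def using \<theta>(1) c binomial_reservoir_ge[OF r n]
    by (intro mult_mono) (auto intro: order.trans[OF _ \<theta>(1)])
  finally have "exp (- \<theta> * real N) \<le> exp (- (c / (4 * real r) ^ r))"
    by simp
  with one_minus_pow_le_exp[OF \<theta>(2)] have "(1 - \<theta>) ^ N \<le> exp (- (c / (4 * real r) ^ r))"
    by (rule order.trans)
  then have "(1 - exp (- (c / (4 * real r) ^ r))) ^ (j + 1) \<le> (1 - (1 - \<theta>) ^ N) ^ (j + 1)"
    using c by (intro power_mono) (auto intro: divide_nonneg_nonneg)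
  then show ?thesis
    by (simp add: N_def vertex_failure_bound_def)
qed

lemma union_failure_bound_le:
  assumes r: "1 \<le> r" and c: "0 < c" and \<theta>: "c / real n ^ r \<le> \<theta>" "\<theta> \<le> 1"
    and n: "4 * (j + 2) + 4 * r \<le> n"
  shows "union_failure_bound d j r n \<theta>
    \<le> real n ^ (j + 1) * real (d + 2) * vertex_failure_bound j r c powr (real n / (2 * real (d + 2)) - real j - 2)"
proof -
  define x where "x = 1 - (1 - (1 - \<theta>) ^ ((n div 2 - (j + 1)) choose r)) ^ (j + 1)"
  define e where "e = (n - n div 2) div (d + 2) - (j + 1)"
  define \<rho> where "\<rho> = vertex_failure_bound j r c"
  have "0 < \<rho>" "\<rho> < 1"
    unfolding \<rho>_def using vertex_failure_bound_bounds[OF c] by auto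
  have "0 \<le> (1 - \<theta>) ^ ((n div 2 - (j + 1)) choose r)" "(1 - \<theta>) ^ ((n div 2 - (j + 1)) choose r) \<le> 1"
    using \<theta> c order.trans[OF _ \<theta>(1), of 0] by (auto intro: power_le_one)
  then have "(1 - (1 - \<theta>) ^ ((n div 2 - (j + 1)) choose r)) ^ (j + 1) \<le> 1"
    by (intro power_le_one) auto
  then have "0 \<le> x"
    unfolding x_def by simp
  moreover have "x \<le> \<rho>"
    unfolding x_def \<rho>_def by (rule vertex_failure_prob_le_bound[OF r c \<theta> n])
  ultimately have "x ^ e \<le> \<rho> ^ e"
    by (simp add: power_mono)
  also have "\<dots> = \<rho> powr real e"
    using \<open>0 < \<rho>\<close> by (simp add: powr_realpow)
  also have "\<dots> \<le> \<rho> powr (real n / (2 * real (d + 2)) - real j - 2)"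
    unfolding e_def using \<open>0 < \<rho>\<close> \<open>\<rho> < 1\<close> block_count_ge by (intro powr_mono') auto
  finally have rate: "x ^ e \<le> \<rho> powr (real n / (2 * real (d + 2)) - real j - 2)" .
  have "n choose (j + 1) \<le> n ^ (j + 1)"
    using n by (intro binomial_le_pow) simp
  then have binomial: "real (n choose (j + 1)) \<le> real n ^ (j + 1)"
    by (metis of_nat_le_iff of_nat_power)
  have "union_failure_bound d j r n \<theta> = real (n choose (j + 1)) * real (d + 2) * x ^ e"
    by (simp add: union_failure_bound_def x_def e_def)
  also have "\<dots> \<le> real n ^ (j + 1) * real (d + 2) * \<rho> powr (real n / (2 * real (d + 2)) - real j - 2)"
    using binomial rate zero_le_power[OF \<open>0 \<le> x\<close>, of e] by (intro mult_mono) auto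
  finally show ?thesis
    unfolding \<rho>_def .
qed

lemma tendsto_union_failure_majorant:
  assumes "0 < \<rho>" "\<rho> < 1"
  shows "(\<lambda>n. real n ^ (j + 1) * real (d + 2) * \<rho> powr (real n / (2 * real (d + 2)) - real j - 2))
    \<longlonglongrightarrow> 0"
proof -
  define \<kappa> where "\<kappa> = - ln \<rho>"
  have "0 < \<kappa>"
    using assms by (simp add: \<kappa>_def)
  have "\<rho> powr x = exp (- \<kappa> * x)" for x
    using assms by (simp add: powr_def \<kappa>_def)
  moreover have "(\<lambda>n. real n ^ (j + 1) * real (d + 2) * exp (- \<kappa> * (real n / (2 * real (d + 2)) - real j - 2)))
    \<longlonglongrightarrow> 0"
    using \<open>0 < \<kappa>\<close> by real_asymp
  ultimately show ?thesis
    by simp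
qed

lemma threshold_eventually_bounds:
  fixes a \<epsilon> :: real and \<beta> q :: "nat \<Rightarrow> real"
  assumes a: "0 < a" and \<epsilon>: "0 < \<epsilon>" and r: "1 \<le> r"
    and \<beta>: "(\<lambda>n. \<bar>\<beta> n\<bar>) \<in> o(\<lambda>n. ln (real n))"
    and q: "\<And>n. q n = (a * ln (real n) + \<beta> n) / real n powr real r * fact r"
  shows "\<forall>\<^sub>F n in sequentially. 0 < q n \<and> \<epsilon> * (a / 2) * fact r / real n ^ r \<le> \<epsilon> / ln (real n) * q n
    \<and> \<epsilon> / ln (real n) * q n \<le> 1"
proof -
  have "\<forall>\<^sub>F n in sequentially. \<bar>\<beta> n\<bar> \<le> a / 2 * \<bar>ln (real n)\<bar>"
    using landau_o.smallD[OF \<beta>, of "a / 2"] a by simp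
  moreover have "\<forall>\<^sub>F n in sequentially. \<epsilon> * (3 * a / 2) * fact r / real n < 1"
    using lim_const_over_n[of "\<epsilon> * (3 * a / 2) * fact r"] by (rule order_tendstoD) simp
  ultimately show ?thesis
    using eventually_ge_at_top[of 3]
  proof eventually_elim
    case (elim n)
    define L where "L = a * ln (real n) + \<beta> n"
    have "0 < ln (real n)"
      using elim(3) by simp
    then have L: "a / 2 * ln (real n) \<le> L" "L \<le> 3 * a / 2 * ln (real n)"
      using elim(1) unfolding L_def by auto
    have "0 < real n ^ r"
      using elim(3) by simp
    have q_n: "q n = L / real n ^ r * fact r" and \<theta>: "\<epsilon> / ln (real n) * q n = \<epsilon> * (L / ln (real n)) * fact r / real n ^ r"
      using elim(3) \<open>0 < ln (real n)\<close> by (simp_all add: q L_def powr_realpow)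
    have "0 < L"
      using L(1) mult_pos_pos[of "a / 2" "ln (real n)"] a \<open>0 < ln (real n)\<close> by linarith
    then have "0 < q n"
      using \<open>0 < real n ^ r\<close> unfolding q_n by simp
    have mono: "\<epsilon> * x * fact r / real n ^ r \<le> \<epsilon> * y * fact r / real n ^ r" if "x \<le> y" for x y
      using that \<epsilon> \<open>0 < real n ^ r\<close> by (intro divide_right_mono mult_right_mono mult_left_mono) auto
    have "a / 2 \<le> L / ln (real n)" "L / ln (real n) \<le> 3 * a / 2"
      using L \<open>0 < ln (real n)\<close> by (simp_all add: le_divide_eq divide_le_eq)
    note lower = mono[OF this(1)] and upper = mono[OF this(2)]
    have "real n \<le> real n ^ r"
      using elim(3) r by (intro self_le_power) auto
    then have "\<epsilon> * (3 * a / 2) * fact r / real n ^ r \<le> \<epsilon> * (3 * a / 2) * fact r / real n"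
      using elim(3) a \<epsilon> \<open>0 < real n ^ r\<close> by (intro divide_left_mono) auto
    with \<open>0 < q n\<close> lower upper elim(2) show ?case
      unfolding \<theta> by linarith
  qed
qed

lemma j_admissible_with_active_index:
  assumes "j_admissible_with d j p \<alpha> \<beta> \<gamma>"
  obtains r where "1 \<le> r" "j + r \<le> d" "0 < \<alpha> (j + r)" "(\<lambda>n. \<bar>\<beta> (j + r) n\<bar>) \<in> o(\<lambda>n. ln (real n))"
    "\<And>n. p (j + r) n = (\<alpha> (j + r) * ln (real n) + \<beta> (j + r) n) / real n powr real r * fact r"
proof -
  obtain m where m: "m \<in> {j + 1..d}" "0 < \<alpha> m"
    using assms unfolding j_admissible_with_def by blast
  then have "m \<in> {1..d}"
    by simp
  note conditions = assms[unfolded j_admissible_with_def, THEN conjunct1, THEN bspec, OF this]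
  then have "\<gamma> m = 0"
    using m(2) by auto
  from conditions have p: "p m n = (\<alpha> m * ln (real n) + \<beta> m n) / real n powr (real m - real j + \<gamma> m)
      * fact (nat (int m - int j))" for n
    by blast
  from conditions \<open>\<gamma> m = 0\<close> have "(\<lambda>n. \<bar>\<beta> m n\<bar>) \<in> o(\<lambda>n. ln (real n))"
    by blast
  moreover have "p (j + (m - j)) n
      = (\<alpha> (j + (m - j)) * ln (real n) + \<beta> (j + (m - j)) n) / real n powr real (m - j) * fact (m - j)" for n
    using m(1) p \<open>\<gamma> m = 0\<close> by (simp add: of_nat_diff nat_diff_distrib)
  ultimately show ?thesis
    using m by (intro that[of "m - j"]) auto
qed

lemma tendsto_prob_extension_event:
  assumes r: "1 \<le> r" "j + r \<le> d" and a: "0 < a" and \<epsilon>: "0 < \<epsilon>"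
    and \<beta>: "(\<lambda>n. \<bar>\<beta> n\<bar>) \<in> o(\<lambda>n. ln (real n))"
    and p: "\<And>n. p (j + r) n = (a * ln (real n) + \<beta> n) / real n powr real r * fact r"
  shows "(\<lambda>n. measure (proc_space d n) (extension_event d n j p (\<epsilon> / ln (real n)))) \<longlonglongrightarrow> 1"
proof -
  define c where "c = \<epsilon> * (a / 2) * fact r"
  define g where "g n = real n ^ (j + 1) * real (d + 2) *
    vertex_failure_bound j r c powr (real n / (2 * real (d + 2)) - real j - 2)" for n
  have "0 < c"
    using \<epsilon> a by (simp add: c_def)
  have "\<forall>\<^sub>F n in sequentially. 1 - g n \<le> measure (proc_space d n) (extension_event d n j p (\<epsilon> / ln (real n)))"
    using threshold_eventually_bounds[OF a \<epsilon> r(1) \<beta> p] eventually_ge_at_top[of "4 * (j + 2) + 4 * r"]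
  proof eventually_elim
    case (elim n)
    define \<theta> where "\<theta> = \<epsilon> / ln (real n) * p (j + r) n"
    have \<theta>: "c / real n ^ r \<le> \<theta>" "\<theta> \<le> 1"
      using elim(1) unfolding \<theta>_def c_def by auto
    moreover have "0 \<le> \<theta>"
      using \<theta>(1) \<open>0 < c\<close> order.trans[of 0 "c / real n ^ r" \<theta>] by simp
    ultimately have "1 - union_failure_bound d j r n \<theta>
        \<le> measure (proc_space d n) (extension_event d n j p (\<epsilon> / ln (real n)))"
      using elim(1) unfolding \<theta>_def by (intro prob_extension_event_ge[OF r]) auto
    moreover have "union_failure_bound d j r n \<theta> \<le> g n"
      unfolding g_def using \<theta> elim(2) by (rule union_failure_bound_le[OF r(1) \<open>0 < c\<close>])
    ultimately show ?case
      by linarith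
  qed
  moreover have "\<forall>\<^sub>F n in sequentially. measure (proc_space d n) (extension_event d n j p (\<epsilon> / ln (real n))) \<le> 1"
    unfolding proc_space_def by (simp add: prob_space.prob_le_1[OF prob_space_iid_unif])
  moreover have "(\<lambda>n. 1 - g n) \<longlonglongrightarrow> 1"
    using tendsto_diff[OF tendsto_const tendsto_union_failure_majorant[OF vertex_failure_bound_bounds[OF \<open>0 < c\<close>]]]
    unfolding g_def by simp
  ultimately show ?thesis
    by (rule tendsto_sandwich) simp
qed

theorem corollary5p4:
  fixes d j :: nat and p :: "nat \<Rightarrow> nat \<Rightarrow> real" and \<epsilon> :: real
  assumes "d \<ge> 2" and "1 \<le> j" and "j \<le> d - 1"
    and "j_critical d j p" and "\<epsilon> > 0"
  shows "(\<lambda>n. measure (proc_space d n)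
            {t \<in> space (proc_space d n).
               \<forall>\<tau>::real. \<tau> \<ge> \<epsilon> / ln (real n) \<longrightarrow>
                 (\<forall>k\<in>{j..d}. \<forall>K C. copyM (cplx d n p t \<tau>) j k K C \<longrightarrow>
                    (\<exists>w a. copyMhat n (cplx d n p t \<tau>) j k K C w a))})
         \<longlonglongrightarrow> 1"
proof -
  obtain \<alpha> \<beta> \<gamma> where "j_admissible_with d j p \<alpha> \<beta> \<gamma>"
    using \<open>j_critical d j p\<close> unfolding j_critical_def by blast
  then obtain r where r: "1 \<le> r" "j + r \<le> d" "0 < \<alpha> (j + r)"
    and \<beta>: "(\<lambda>n. \<bar>\<beta> (j + r) n\<bar>) \<in> o(\<lambda>n. ln (real n))"
    and p: "\<And>n. p (j + r) n = (\<alpha> (j + r) * ln (real n) + \<beta> (j + r) n) / real n powr real r * fact r"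
    by (rule j_admissible_with_active_index) blast
  have "(\<lambda>n. measure (proc_space d n) (extension_event d n j p (\<epsilon> / ln (real n)))) \<longlonglongrightarrow> 1"
    using tendsto_prob_extension_event[where p = p, OF r(1,2,3) \<open>\<epsilon> > 0\<close> \<beta> p] .
  then show ?thesis
    by (simp add: copies_extend_def extension_event_def)
qed

end
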